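(* Under the assumptions and notation of Theorem 3.1, fix $\varphi\in D$ and let $\Psi_t(s):=\big\|[F(s/m(t))]^{m(t)}\varphi-T_s\varphi\big\|_X$. Then for each $\varepsilon>0$ there exist $t_\varepsilon>0$ and $s_\varepsilon>0$ such that $\Psi_t(s)/s<\varepsilon$ for all $t\in(0,t_\varepsilon]$ and all $s\in(0,s_\varepsilon]$.
   Context: $X$ is a Banach space; $(T_t)_{t\ge0}$ a strongly continuous contraction semigroup on $X$ with generator $(L,\mathrm{Dom}(L))$; $(F(t))_{t\ge0}$ a strongly continuous family of contractions on $X$ with $F(0)=\mathrm{Id}$, Chernoff equivalent to $(T_t)$, i.e. there is a core $D\subset\mathrm{Dom}(L)$ for $L$ with $\lim_{t\to0}\|t^{-1}(F(t)\varphi-\varphi)-L\varphi\|_X=0$ for $\varphi\in D$ (and consequently $[F(\tau/n)]^n\psi\to T_\tau\psi$ uniformly for $\tau$ in compact intervals, for every $\psi\in X$); $m:(0,\infty)\to\mathbb N_0$ monotone with $m(t)\to\infty$ as $t\to0$; $B^0:=\mathrm{Id}$. *)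

theory Defs
  imports "HOL-Analysis.Analysis"
begin

definition sc_contraction_semigroup :: "(real \<Rightarrow> 'a::banach \<Rightarrow>\<^sub>L 'a) \<Rightarrow> bool" where
  "sc_contraction_semigroup T \<longleftrightarrow>
     T 0 = id_blinfun \<and>
     (\<forall>s\<ge>0. \<forall>t\<ge>0. T (s + t) = T s o\<^sub>L T t) \<and>
     (\<forall>t\<ge>0. norm (T t) \<le> 1) \<and>
     (\<forall>x. continuous_on {0..} (\<lambda>t. T t x))"

definition gen_domain :: "(real \<Rightarrow> 'a::banach \<Rightarrow>\<^sub>L 'a) \<Rightarrow> 'a set" where
  "gen_domain T = {x. \<exists>y. ((\<lambda>t. (1 / t) *\<^sub>R (T t x - x)) \<longlongrightarrow> y) (at_right 0)}"

definition is_generator ::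
  "(real \<Rightarrow> 'a::banach \<Rightarrow>\<^sub>L 'a) \<Rightarrow> ('a \<Rightarrow> 'a) \<Rightarrow> 'a set \<Rightarrow> bool" where
  "is_generator T L Dom \<longleftrightarrow> Dom = gen_domain T \<and>
     (\<forall>x\<in>Dom. ((\<lambda>t. (1 / t) *\<^sub>R (T t x - x)) \<longlongrightarrow> L x) (at_right 0))"

definition is_core :: "('a::banach \<Rightarrow> 'a) \<Rightarrow> 'a set \<Rightarrow> 'a set \<Rightarrow> bool" where
  "is_core L Dom D \<longleftrightarrow> D \<subseteq> Dom \<and>
     (\<forall>x\<in>Dom. \<forall>e>0. \<exists>d\<in>D. norm (d - x) + norm (L d - L x) < e)"

definition sc_contraction_family :: "(real \<Rightarrow> 'a::banach \<Rightarrow>\<^sub>L 'a) \<Rightarrow> bool" where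
  "sc_contraction_family F \<longleftrightarrow>
     F 0 = id_blinfun \<and>
     (\<forall>t\<ge>0. norm (F t) \<le> 1) \<and>
     (\<forall>x. continuous_on {0..} (\<lambda>t. F t x))"

definition chernoff_equivalent_on ::
  "(real \<Rightarrow> 'a::banach \<Rightarrow>\<^sub>L 'a) \<Rightarrow> ('a \<Rightarrow> 'a) \<Rightarrow> 'a set \<Rightarrow> bool" where
  "chernoff_equivalent_on F L D \<longleftrightarrow>
     (\<forall>\<phi>\<in>D. ((\<lambda>t. norm ((1 / t) *\<^sub>R (F t \<phi> - \<phi>) - L \<phi>)) \<longlongrightarrow> 0) (at_right 0))"

definition op_pow :: "('a::real_normed_vector \<Rightarrow>\<^sub>L 'a) \<Rightarrow> nat \<Rightarrow> 'a \<Rightarrow> 'a" where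
  "op_pow B n = (blinfun_apply B ^^ n)"

end

theory Submission
  imports Defs
begin

text \<open>Write \<open>\<psi> = L \<phi>\<close>, \<open>A = F h\<close> with \<open>h = s/n\<close>, and pick \<open>d \<in> D\<close> close to \<open>\<psi>\<close>; this is possible
because the difference quotients of \<open>T\<close> at \<open>\<phi>\<close> lie in the domain, which the core is dense in.
Telescoping gives \<open>A\<^sup>n \<phi> - \<phi> = \<Sum>\<^sub>k\<^sub><\<^sub>n A\<^sup>k (A \<phi> - \<phi>)\<close>, and \<open>A \<phi> - \<phi> \<approx> h \<psi>\<close>. Since \<open>A\<close> is a contraction,
\<open>\<parallel>A\<^sup>k \<psi> - \<psi>\<parallel> \<le> 2 \<parallel>\<psi> - d\<parallel> + k \<parallel>A d - d\<parallel>\<close>, and \<open>n \<parallel>A d - d\<parallel> = O(s)\<close> because \<open>d \<in> D\<close>. Hence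
\<open>A\<^sup>n \<phi> = \<phi> + s \<psi> + o(s)\<close>, uniformly in \<open>n \<ge> 1\<close>, and likewise \<open>T s \<phi> = \<phi> + s \<psi> + o(s)\<close>.\<close>

lemma op_pow_0 [simp]: "op_pow A 0 x = x"
  by (simp add: op_pow_def)

lemma op_pow_Suc: "op_pow A (Suc k) x = A (op_pow A k x)"
  by (simp add: op_pow_def)

lemma op_pow_Suc_right: "op_pow A (Suc k) x = op_pow A k (A x)"
  by (simp add: op_pow_def funpow_Suc_right del: funpow.simps)

lemma op_pow_add: "op_pow A k (x + y) = op_pow A k x + op_pow A k y"
  by (induct k) (simp_all add: op_pow_Suc blinfun.add_right)

lemma op_pow_diff: "op_pow A k (x - y) = op_pow A k x - op_pow A k y"
  by (induct k) (simp_all add: op_pow_Suc blinfun.diff_right)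

lemma op_pow_scaleR: "op_pow A k (c *\<^sub>R x) = c *\<^sub>R op_pow A k x"
  by (induct k) (simp_all add: op_pow_Suc blinfun.scaleR_right)

lemma norm_op_pow_le:
  assumes "norm A \<le> 1"
  shows "norm (op_pow A k x) \<le> norm x"
proof (induct k)
  case (Suc k)
  have "norm (A (op_pow A k x)) \<le> norm A * norm (op_pow A k x)"
    by (rule norm_blinfun)
  also have "\<dots> \<le> norm (op_pow A k x)"
    using assms by (simp add: mult_left_le_one_le)
  finally show ?case
    using Suc by (simp add: op_pow_Suc)
qed simp

lemma op_pow_minus_self_telescope: "op_pow A n x - x = (\<Sum>k<n. op_pow A k (A x - x))"
proof (induct n)
  case (Suc n)
  have "op_pow A (Suc n) x - x = op_pow A n (A x - x) + (op_pow A n x - x)"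
    by (simp add: op_pow_Suc_right op_pow_diff)
  then show ?case
    using Suc by simp
qed simp

lemma norm_op_pow_minus_self_le:
  assumes "norm A \<le> 1"
  shows "norm (op_pow A k x - x) \<le> real k * norm (A x - x)"
proof -
  have "norm (op_pow A k x - x) \<le> (\<Sum>i<k. norm (op_pow A i (A x - x)))"
    unfolding op_pow_minus_self_telescope by (rule norm_sum)
  also have "\<dots> \<le> of_nat (card {..<k}) * norm (A x - x)"
    by (rule sum_bounded_above) (rule norm_op_pow_le[OF assms])
  finally show ?thesis
    by simp
qed

lemma norm_op_pow_minus_self_le_approx:
  assumes "norm A \<le> 1"
  shows "norm (op_pow A k x - x) \<le> 2 * norm (x - d) + real k * norm (A d - d)"
proof -
  have "op_pow A k x - x = op_pow A k (x - d) + (op_pow A k d - d) + (d - x)"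
    by (simp add: op_pow_diff)
  then have "norm (op_pow A k x - x) \<le> norm (op_pow A k (x - d)) + norm (op_pow A k d - d) + norm (d - x)"
    by (metis norm_triangle_le order_refl add_mono)
  also have "\<dots> \<le> norm (x - d) + real k * norm (A d - d) + norm (x - d)"
    by (intro add_mono norm_op_pow_le[OF assms] norm_op_pow_minus_self_le[OF assms])
       (simp add: norm_minus_commute)
  finally show ?thesis
    by simp
qed

lemma norm_op_pow_minus_linear_le:
  assumes "norm A \<le> 1" "0 < h"
  shows "norm (op_pow A n \<phi> - \<phi> - (real n * h) *\<^sub>R \<psi>)
    \<le> real n * h * (2 * norm (\<psi> - d) + real n * norm (A d - d) + norm ((1 / h) *\<^sub>R (A \<phi> - \<phi>) - \<psi>))"
proof -
  define r where "r = (1 / h) *\<^sub>R (A \<phi> - \<phi>) - \<psi>"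
  define M where "M = 2 * norm (\<psi> - d) + real n * norm (A d - d)"
  have "A \<phi> - \<phi> = h *\<^sub>R (\<psi> + r)"
    using assms(2) by (simp add: r_def)
  then have "op_pow A n \<phi> - \<phi> = (\<Sum>k<n. h *\<^sub>R (op_pow A k \<psi> + op_pow A k r))"
    unfolding op_pow_minus_self_telescope[of A n \<phi>] by (simp add: op_pow_scaleR op_pow_add)
  also have "\<dots> = (\<Sum>k<n. h *\<^sub>R ((op_pow A k \<psi> - \<psi>) + op_pow A k r)) + (real n * h) *\<^sub>R \<psi>"
    by (simp add: sum.distrib sum_subtractf scaleR_diff_right scaleR_add_right scaleR_sum_left[symmetric])
  finally have "op_pow A n \<phi> - \<phi> - (real n * h) *\<^sub>R \<psi> = (\<Sum>k<n. h *\<^sub>R ((op_pow A k \<psi> - \<psi>) + op_pow A k r))"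
    by simp
  then have "norm (op_pow A n \<phi> - \<phi> - (real n * h) *\<^sub>R \<psi>)
      \<le> (\<Sum>k<n. norm (h *\<^sub>R ((op_pow A k \<psi> - \<psi>) + op_pow A k r)))"
    by (metis norm_sum)
  also have "\<dots> \<le> of_nat (card {..<n}) * (h * (M + norm r))"
  proof (rule sum_bounded_above)
    fix k
    assume "k \<in> {..<n}"
    then have "real k * norm (A d - d) \<le> real n * norm (A d - d)"
      by (intro mult_right_mono) auto
    then have "norm (op_pow A k \<psi> - \<psi>) \<le> M"
      using norm_op_pow_minus_self_le_approx[OF assms(1), of k \<psi> d] by (simp add: M_def)
    then have "norm ((op_pow A k \<psi> - \<psi>) + op_pow A k r) \<le> M + norm r"
      using norm_op_pow_le[OF assms(1), of k r] by (meson norm_triangle_le add_mono)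
    then show "norm (h *\<^sub>R ((op_pow A k \<psi> - \<psi>) + op_pow A k r)) \<le> h * (M + norm r)"
      using assms(2) by (simp add: mult_left_mono)
  qed
  finally show ?thesis
    by (simp add: M_def r_def algebra_simps)
qed

lemma norm_op_pow_minus_le:
  assumes "norm A \<le> 1" "0 < h" "n > 0" "s = real n * h"
  shows "norm (op_pow A n \<phi> - y) \<le> s * (2 * norm (\<psi> - d) + s * norm ((1 / h) *\<^sub>R (A d - d))
    + norm ((1 / h) *\<^sub>R (A \<phi> - \<phi>) - \<psi>) + norm ((1 / s) *\<^sub>R (y - \<phi>) - \<psi>))"
proof -
  have "s > 0"
    using assms by simp
  have "real n * norm (A d - d) = s * norm ((1 / h) *\<^sub>R (A d - d))"
    using assms(2,4) by simp
  then have power: "norm (op_pow A n \<phi> - \<phi> - s *\<^sub>R \<psi>)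
      \<le> s * (2 * norm (\<psi> - d) + s * norm ((1 / h) *\<^sub>R (A d - d)) + norm ((1 / h) *\<^sub>R (A \<phi> - \<phi>) - \<psi>))"
    using norm_op_pow_minus_linear_le[OF assms(1,2), of n \<phi> \<psi> d] assms(4) by simp
  have "y - \<phi> - s *\<^sub>R \<psi> = s *\<^sub>R ((1 / s) *\<^sub>R (y - \<phi>) - \<psi>)"
    using \<open>s > 0\<close> by (simp add: scaleR_diff_right)
  then have target: "norm (y - \<phi> - s *\<^sub>R \<psi>) = s * norm ((1 / s) *\<^sub>R (y - \<phi>) - \<psi>)"
    using \<open>s > 0\<close> by simp
  have "norm (op_pow A n \<phi> - y) \<le> norm (op_pow A n \<phi> - \<phi> - s *\<^sub>R \<psi>) + norm (y - \<phi> - s *\<^sub>R \<psi>)"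
    using norm_triangle_ineq4[of "op_pow A n \<phi> - \<phi> - s *\<^sub>R \<psi>" "y - \<phi> - s *\<^sub>R \<psi>"] by simp
  with power target show ?thesis
    by (simp add: algebra_simps)
qed

lemma norm_op_pow_minus_less:
  fixes A :: "'a::real_normed_vector \<Rightarrow>\<^sub>L 'a"
  assumes "norm A \<le> 1" "0 < h" "n > 0" "s = real n * h"
    and "norm (\<psi> - d) < \<epsilon> / 8" "norm ((1 / h) *\<^sub>R (A d - d)) < C" "s * C < \<epsilon> / 4"
    and "norm ((1 / h) *\<^sub>R (A \<phi> - \<phi>) - \<psi>) < \<epsilon> / 4" "norm ((1 / s) *\<^sub>R (y - \<phi>) - \<psi>) < \<epsilon> / 4"
  shows "norm (op_pow A n \<phi> - y) < s * \<epsilon>"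
proof -
  have "s > 0"
    using assms(2-4) by simp
  then have "s * norm ((1 / h) *\<^sub>R (A d - d)) \<le> s * C"
    using assms(6) by (intro mult_left_mono) auto
  then have "2 * norm (\<psi> - d) + s * norm ((1 / h) *\<^sub>R (A d - d))
      + norm ((1 / h) *\<^sub>R (A \<phi> - \<phi>) - \<psi>) + norm ((1 / s) *\<^sub>R (y - \<phi>) - \<psi>) < \<epsilon>"
    (is "?err < \<epsilon>")
    using assms(5,7-9) by linarith
  have "norm (op_pow A n \<phi> - y) \<le> s * ?err"
    using assms(1-4) by (rule norm_op_pow_minus_le)
  also have "\<dots> < s * \<epsilon>"
    using \<open>?err < \<epsilon>\<close> \<open>s > 0\<close> by (intro mult_strict_left_mono)
  finally show ?thesis .
qed

lemma subspace_gen_domain: "subspace (gen_domain T)"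
  unfolding subspace_def
proof (intro conjI ballI allI)
  show "0 \<in> gen_domain T"
    by (auto simp: gen_domain_def blinfun.zero_right)
next
  fix x z
  assume "x \<in> gen_domain T" "z \<in> gen_domain T"
  then obtain y w where "((\<lambda>t. (1 / t) *\<^sub>R (T t x - x)) \<longlongrightarrow> y) (at_right 0)"
    and "((\<lambda>t. (1 / t) *\<^sub>R (T t z - z)) \<longlongrightarrow> w) (at_right 0)"
    by (auto simp: gen_domain_def)
  then have "((\<lambda>t. (1 / t) *\<^sub>R (T t x - x) + (1 / t) *\<^sub>R (T t z - z)) \<longlongrightarrow> y + w) (at_right 0)"
    by (rule tendsto_add)
  moreover have "(\<lambda>t. (1 / t) *\<^sub>R (T t x - x) + (1 / t) *\<^sub>R (T t z - z))
      = (\<lambda>t. (1 / t) *\<^sub>R (T t (x + z) - (x + z)))"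
    by (simp add: fun_eq_iff blinfun.add_right algebra_simps)
  ultimately show "x + z \<in> gen_domain T"
    by (auto simp: gen_domain_def)
next
  fix c x
  assume "x \<in> gen_domain T"
  then obtain y where "((\<lambda>t. (1 / t) *\<^sub>R (T t x - x)) \<longlongrightarrow> y) (at_right 0)"
    by (auto simp: gen_domain_def)
  then have "((\<lambda>t. c *\<^sub>R ((1 / t) *\<^sub>R (T t x - x))) \<longlongrightarrow> c *\<^sub>R y) (at_right 0)"
    by (intro tendsto_scaleR tendsto_const)
  moreover have "(\<lambda>t. c *\<^sub>R ((1 / t) *\<^sub>R (T t x - x))) = (\<lambda>t. (1 / t) *\<^sub>R (T t (c *\<^sub>R x) - c *\<^sub>R x))"
    by (simp add: fun_eq_iff blinfun.scaleR_right blinfun.diff_right algebra_simps)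
  ultimately show "c *\<^sub>R x \<in> gen_domain T"
    by (auto simp: gen_domain_def)
qed

lemma semigroup_maps_gen_domain:
  assumes "sc_contraction_semigroup T" "x \<in> gen_domain T" "h \<ge> 0"
  shows "T h x \<in> gen_domain T"
proof -
  obtain y where y: "((\<lambda>t. (1 / t) *\<^sub>R (T t x - x)) \<longlongrightarrow> y) (at_right 0)"
    using assms(2) by (auto simp: gen_domain_def)
  have "((\<lambda>t. T h ((1 / t) *\<^sub>R (T t x - x))) \<longlongrightarrow> T h y) (at_right 0)"
    by (intro blinfun.tendsto y tendsto_const)
  moreover have "\<forall>\<^sub>F t in at_right 0. T h ((1 / t) *\<^sub>R (T t x - x)) = (1 / t) *\<^sub>R (T t (T h x) - T h x)"
  proof (rule eventually_mono[OF eventually_at_right_less])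
    fix t :: real
    assume "0 < t"
    then have "T t (T h x) = T h (T t x)"
      using assms(1,3) unfolding sc_contraction_semigroup_def
      by (metis add.commute blinfun_apply_blinfun_compose less_eq_real_def)
    then show "T h ((1 / t) *\<^sub>R (T t x - x)) = (1 / t) *\<^sub>R (T t (T h x) - T h x)"
      by (simp add: blinfun.scaleR_right blinfun.diff_right)
  qed
  ultimately have "((\<lambda>t. (1 / t) *\<^sub>R (T t (T h x) - T h x)) \<longlongrightarrow> T h y) (at_right 0)"
    by (rule Lim_transform_eventually)
  then show ?thesis
    by (auto simp: gen_domain_def)
qed

lemma core_dense:
  assumes "is_core L Dom D"
  shows "Dom \<subseteq> closure D"
proof
  fix x
  assume "x \<in> Dom"
  show "x \<in> closure D"
    unfolding closure_approachable
  proof (intro allI impI)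
    fix e :: real
    assume "e > 0"
    then obtain d where "d \<in> D" "norm (d - x) + norm (L d - L x) < e"
      using assms \<open>x \<in> Dom\<close> unfolding is_core_def by blast
    moreover from this(2) have "dist d x < e"
      using norm_ge_zero[of "L d - L x"] unfolding dist_norm by linarith
    ultimately show "\<exists>d\<in>D. dist d x < e"
      by blast
  qed
qed

lemma generator_image_in_closure_core:
  assumes "sc_contraction_semigroup T" "is_generator T L Dom" "is_core L Dom D" "x \<in> Dom"
  shows "L x \<in> closure D"
proof (rule Lim_in_closed_set)
  have Dom: "Dom = gen_domain T"
    using assms(2) by (simp add: is_generator_def)
  show "((\<lambda>t. (1 / t) *\<^sub>R (T t x - x)) \<longlongrightarrow> L x) (at_right 0)"
    using assms(2,4) by (simp add: is_generator_def)
  show "\<forall>\<^sub>F t in at_right 0. (1 / t) *\<^sub>R (T t x - x) \<in> closure D"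
  proof (rule eventually_mono[OF eventually_at_right_less])
    fix t :: real
    assume "0 < t"
    then have "(1 / t) *\<^sub>R (T t x - x) \<in> Dom"
      using semigroup_maps_gen_domain[OF assms(1), of x t] assms(4) subspace_gen_domain[of T]
      by (simp add: Dom subspace_diff subspace_scale)
    then show "(1 / t) *\<^sub>R (T t x - x) \<in> closure D"
      using core_dense[OF assms(3)] by blast
  qed
qed auto

lemma chernoff_equivalent_onD:
  assumes "chernoff_equivalent_on F L D" "x \<in> D"
  shows "((\<lambda>t. (1 / t) *\<^sub>R (F t x - x)) \<longlongrightarrow> L x) (at_right 0)"
proof -
  have "((\<lambda>t. norm ((1 / t) *\<^sub>R (F t x - x) - L x)) \<longlongrightarrow> 0) (at_right 0)"
    using assms unfolding chernoff_equivalent_on_def by blast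
  then show ?thesis
    by (rule Lim_null[THEN iffD2, OF tendsto_norm_zero_iff[THEN iffD1]])
qed

lemma op_pow_error_uniform:
  fixes F T :: "real \<Rightarrow> 'a::real_normed_vector \<Rightarrow>\<^sub>L 'a"
  assumes contr: "\<forall>t\<ge>0. norm (F t) \<le> 1"
    and F_\<phi>: "((\<lambda>t. (1 / t) *\<^sub>R (F t \<phi> - \<phi>)) \<longlongrightarrow> \<psi>) (at_right 0)"
    and T_\<phi>: "((\<lambda>t. (1 / t) *\<^sub>R (T t \<phi> - \<phi>)) \<longlongrightarrow> \<psi>) (at_right 0)"
    and F_d: "((\<lambda>t. (1 / t) *\<^sub>R (F t d - d)) \<longlongrightarrow> w) (at_right 0)"
    and d: "norm (\<psi> - d) < \<epsilon> / 8"
  shows "\<exists>b>0. \<forall>s\<in>{0<..b}. \<forall>n>0. norm (op_pow (F (s / real n)) n \<phi> - T s \<phi>) / s < \<epsilon>"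
proof -
  define C where "C = norm w + 1"
  have "\<epsilon> > 0"
    using d norm_ge_zero[of "\<psi> - d"] by linarith
  have "((\<lambda>t. t * C) \<longlongrightarrow> 0) (at_right 0)"
    by (intro tendsto_mult_left_zero tendsto_ident_at)
  then have "\<forall>\<^sub>F t in at_right 0. t * C < \<epsilon> / 4"
    by (rule order_tendstoD(2)) (use \<open>\<epsilon> > 0\<close> in simp)
  moreover have "\<forall>\<^sub>F t in at_right 0. norm ((1 / t) *\<^sub>R (F t d - d)) < C"
    using order_tendstoD(2)[OF tendsto_norm[OF F_d]] by (simp add: C_def)
  moreover have "\<forall>\<^sub>F t in at_right 0. norm ((1 / t) *\<^sub>R (F t \<phi> - \<phi>) - \<psi>) < \<epsilon> / 4"
    using tendsto_iff[THEN iffD1, OF F_\<phi>, rule_format, of "\<epsilon> / 4"] \<open>\<epsilon> > 0\<close> by (simp add: dist_norm)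
  moreover have "\<forall>\<^sub>F t in at_right 0. norm ((1 / t) *\<^sub>R (T t \<phi> - \<phi>) - \<psi>) < \<epsilon> / 4"
    using tendsto_iff[THEN iffD1, OF T_\<phi>, rule_format, of "\<epsilon> / 4"] \<open>\<epsilon> > 0\<close> by (simp add: dist_norm)
  ultimately have "\<forall>\<^sub>F t in at_right 0. norm ((1 / t) *\<^sub>R (F t \<phi> - \<phi>) - \<psi>) < \<epsilon> / 4
      \<and> norm ((1 / t) *\<^sub>R (T t \<phi> - \<phi>) - \<psi>) < \<epsilon> / 4
      \<and> norm ((1 / t) *\<^sub>R (F t d - d)) < C \<and> t * C < \<epsilon> / 4"
    by (intro eventually_conj)
  then obtain b where "b > 0" and b: "\<And>t. 0 < t \<Longrightarrow> t < b \<Longrightarrow>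
      norm ((1 / t) *\<^sub>R (F t \<phi> - \<phi>) - \<psi>) < \<epsilon> / 4
      \<and> norm ((1 / t) *\<^sub>R (T t \<phi> - \<phi>) - \<psi>) < \<epsilon> / 4
      \<and> norm ((1 / t) *\<^sub>R (F t d - d)) < C \<and> t * C < \<epsilon> / 4"
    unfolding eventually_at_right_field by auto
  have "\<forall>s\<in>{0<..b / 2}. \<forall>n>0. norm (op_pow (F (s / real n)) n \<phi> - T s \<phi>) / s < \<epsilon>"
  proof (intro ballI allI impI)
    fix s and n :: nat
    assume s: "s \<in> {0<..b / 2}" and "n > 0"
    define h where "h = s / real n"
    have h: "0 < h" "h \<le> s" "s = real n * h"
      using s \<open>n > 0\<close> by (auto simp: h_def field_simps)
    have "s < b"
      using s \<open>b > 0\<close> by simp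
    have at_h: "norm ((1 / h) *\<^sub>R (F h \<phi> - \<phi>) - \<psi>) < \<epsilon> / 4 \<and> norm ((1 / h) *\<^sub>R (F h d - d)) < C"
      using b[of h] h \<open>s < b\<close> by (meson le_less_trans)
    have at_s: "norm ((1 / s) *\<^sub>R (T s \<phi> - \<phi>) - \<psi>) < \<epsilon> / 4 \<and> s * C < \<epsilon> / 4"
      using b[of s] s \<open>s < b\<close> by simp
    have "norm (op_pow (F h) n \<phi> - T s \<phi>) < s * \<epsilon>"
      using at_h at_s d contr h \<open>n > 0\<close> by (intro norm_op_pow_minus_less) auto
    then show "norm (op_pow (F (s / real n)) n \<phi> - T s \<phi>) / s < \<epsilon>"
      using s by (simp add: h_def divide_less_eq mult.commute)
  qed
  then show ?thesis
    using \<open>b > 0\<close> by (intro exI[of _ "b / 2"]) auto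
qed

theorem lemma4:
  fixes T F :: "real \<Rightarrow> 'a::banach \<Rightarrow>\<^sub>L 'a"
    and L :: "'a \<Rightarrow> 'a" and Dom D :: "'a set"
    and m :: "real \<Rightarrow> nat" and \<phi> :: 'a
  assumes "sc_contraction_semigroup T"
    and "is_generator T L Dom"
    and "sc_contraction_family F"
    and "is_core L Dom D"
    and "chernoff_equivalent_on F L D"
    and "\<forall>s t. 0 < s \<and> s \<le> t \<longrightarrow> m t \<le> m s"
    and "filterlim m at_top (at_right 0)"
    and "\<phi> \<in> D"
    and "\<epsilon> > 0"
  shows "\<exists>t\<^sub>\<epsilon>>0. \<exists>s\<^sub>\<epsilon>>0. \<forall>t\<in>{0<..t\<^sub>\<epsilon>}. \<forall>s\<in>{0<..s\<^sub>\<epsilon>}.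
           norm (op_pow (F (s / real (m t))) (m t) \<phi> - T s \<phi>) / s < \<epsilon>"
proof -
  have "\<phi> \<in> Dom"
    using assms(4,8) by (auto simp: is_core_def)
  have "\<epsilon> / 8 > 0"
    using assms(9) by simp
  moreover have "L \<phi> \<in> closure D"
    using generator_image_in_closure_core[OF assms(1,2,4) \<open>\<phi> \<in> Dom\<close>] .
  ultimately obtain d where "d \<in> D" "dist d (L \<phi>) < \<epsilon> / 8"
    unfolding closure_approachable by blast
  moreover have "((\<lambda>t. (1 / t) *\<^sub>R (T t \<phi> - \<phi>)) \<longlongrightarrow> L \<phi>) (at_right 0)"
    using assms(2) \<open>\<phi> \<in> Dom\<close> by (simp add: is_generator_def)
  ultimately obtain s\<^sub>\<epsilon> where "s\<^sub>\<epsilon> > 0"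
    and s\<^sub>\<epsilon>: "\<forall>s\<in>{0<..s\<^sub>\<epsilon>}. \<forall>n>0. norm (op_pow (F (s / real n)) n \<phi> - T s \<phi>) / s < \<epsilon>"
    using op_pow_error_uniform[of F \<phi> "L \<phi>" T d "L d" \<epsilon>] assms(3,8)
      chernoff_equivalent_onD[OF assms(5)]
    by (auto simp: sc_contraction_family_def dist_norm norm_minus_commute)
  \<comment> \<open>The bound above holds for every number of steps, so of \<open>m\<close> only \<open>m t \<ge> 1\<close> near \<open>0\<close>
     is needed.\<close>
  have "\<forall>\<^sub>F t in at_right 0. 1 \<le> m t"
    using assms(7) by (simp add: filterlim_at_top)
  then obtain b where "b > 0" and b: "\<forall>t>0. t < b \<longrightarrow> 1 \<le> m t"
    unfolding eventually_at_right_field by auto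
  then have "\<forall>t\<in>{0<..b / 2}. m t > 0"
    by force
  with \<open>b > 0\<close> \<open>s\<^sub>\<epsilon> > 0\<close> s\<^sub>\<epsilon> show ?thesis
    by (intro exI[of _ "b / 2"] exI[of _ s\<^sub>\<epsilon>]) auto
qed

end
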